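(* For all $z\in(0,1/4)$, $\omega_3=3\omega_2/4$.
   Context: Let $d(x)=(zx^2-x+z)^2-4z^2x^2$, whose roots are $x_1=[1+2z-(1+4z)^{1/2}]/(2z)<x_2=[1-2z-(1-4z)^{1/2}]/(2z)<x_3=[1-2z+(1-4z)^{1/2}]/(2z)<x_4=[1+2z+(1+4z)^{1/2}]/(2z)$. Define $\omega_2=\int_{x_2}^{x_3}\frac{dx}{[d(x)]^{1/2}}$ and $\omega_3=\int_{-\infty}^{x_1}\frac{dx}{[d(x)]^{1/2}}$ (positive square roots of positive quantities). *)

theory Defs
  imports "HOL-Analysis.Analysis"
begin

definition dpoly :: "real \<Rightarrow> real \<Rightarrow> real" where
  "dpoly z x = (z * x^2 - x + z)^2 - 4 * z^2 * x^2"

definition root1 :: "real \<Rightarrow> real" where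
  "root1 z = (1 + 2*z - sqrt (1 + 4*z)) / (2*z)"
definition root2 :: "real \<Rightarrow> real" where
  "root2 z = (1 - 2*z - sqrt (1 - 4*z)) / (2*z)"
definition root3 :: "real \<Rightarrow> real" where
  "root3 z = (1 - 2*z + sqrt (1 - 4*z)) / (2*z)"
definition root4 :: "real \<Rightarrow> real" where
  "root4 z = (1 + 2*z + sqrt (1 + 4*z)) / (2*z)"

text \<open>Integrand 1/sqrt(d(x)); both periods are convergent improper integrals of a
nonnegative function, rendered as (Henstock-Kurzweil) integrals over the intervals.\<close>
definition integrand :: "real \<Rightarrow> real \<Rightarrow> real" where
  "integrand z x = 1 / sqrt (dpoly z x)"

definition omega2 :: "real \<Rightarrow> real" where
  "omega2 z = integral {root2 z .. root3 z} (integrand z)"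

definition omega3 :: "real \<Rightarrow> real" where
  "omega3 z = integral {.. root1 z} (integrand z)"

end

theory Submission
  imports Defs
begin

text \<open>The substitution \<open>t = x + 1/x\<close> turns \<open>dx / sqrt (d x)\<close> into \<open>dt / sqrt (E t)\<close> with
  \<open>E t = z\<^sup>2 (t\<^sup>2 - 4) ((t - c)\<^sup>2 - 4)\<close> and \<open>c = 1/z > 4\<close>, a quartic with roots \<open>-2, 2, c - 2, c + 2\<close>.
  The reflection \<open>t \<mapsto> c - t\<close> and the Moebius involution \<open>t \<mapsto> (c t - 8) / (2 t - c)\<close> preserve this
  differential; the latter exchanges \<open>(2, c/2)\<close> with \<open>(-\<infinity>, -2)\<close> and \<open>(c/2, c - 2)\<close> with
  \<open>(c + 2, \<infinity>)\<close>. So if \<open>I\<close> is the integral over \<open>(-\<infinity>, -2)\<close>, the integrals over \<open>(2, c - 2)\<close> and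
  \<open>(c + 2, \<infinity>)\<close> are \<open>2 I\<close> and \<open>I\<close>. The map \<open>x \<mapsto> x + 1/x\<close> sends each of \<open>(x\<^sub>2, 1)\<close>, \<open>(1, x\<^sub>3)\<close>
  bijectively onto \<open>(2, c - 2)\<close>, each of \<open>(-\<infinity>, -1)\<close>, \<open>(-1, 0)\<close> onto \<open>(-\<infinity>, -2)\<close>, and \<open>(0, x\<^sub>1)\<close>
  onto \<open>(c + 2, \<infinity>)\<close>; hence \<open>\<omega>\<^sub>2 = 4 I\<close> and \<open>\<omega>\<^sub>3 = 3 I\<close>.\<close>

lemma absolutely_integrable_substitution_iff:
  fixes g g' f F :: "real \<Rightarrow> real"
  assumes S: "S \<in> sets lebesgue"
    and deriv: "\<And>x. x \<in> S \<Longrightarrow> (g has_real_derivative g' x) (at x)"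
    and inj: "inj_on g S"
    and f_eq: "\<And>x. x \<in> S \<Longrightarrow> \<bar>g' x\<bar> * F (g x) = f x"
  shows "f absolutely_integrable_on S \<and> integral S f = v \<longleftrightarrow>
         F absolutely_integrable_on g ` S \<and> integral (g ` S) F = v"
proof -
  have "(\<lambda>x. \<bar>g' x\<bar> * F (g x)) absolutely_integrable_on S \<and>
        integral S (\<lambda>x. \<bar>g' x\<bar> * F (g x)) = v \<longleftrightarrow>
        F absolutely_integrable_on g ` S \<and> integral (g ` S) F = v"
    by (rule has_absolute_integral_change_of_variables_1'[OF S])
       (auto intro: has_field_derivative_at_within deriv inj)
  moreover have "(\<lambda>x. \<bar>g' x\<bar> * F (g x)) absolutely_integrable_on S \<longleftrightarrow> f absolutely_integrable_on S"
    by (rule absolutely_integrable_spike_eq[of "{}"]) (auto simp: f_eq)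
  moreover have "integral S (\<lambda>x. \<bar>g' x\<bar> * F (g x)) = integral S f"
    by (rule integral_cong) (simp add: f_eq)
  ultimately show ?thesis by simp
qed

lemma absolutely_integrable_finite_spike:
  fixes f :: "real \<Rightarrow> real"
  assumes "f absolutely_integrable_on S" "finite E" "S - E \<subseteq> T" "T - E \<subseteq> S"
  shows "f absolutely_integrable_on T \<and> integral T f = integral S f"
proof -
  have "negligible {x \<in> S - T. f x \<noteq> 0}" "negligible {x \<in> T - S. f x \<noteq> 0}"
    by (rule negligible_subset[of E]; use assms in auto)+
  then show ?thesis
    using absolutely_integrable_spike_set_eq integral_spike_set assms(1) by blast
qed

lemma absolutely_integrable_split:
  fixes f :: "real \<Rightarrow> real"
  assumes A: "f absolutely_integrable_on A" and B: "f absolutely_integrable_on B"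
    and "A \<inter> B = {}" "A \<union> B \<subseteq> C" "finite (C - (A \<union> B))"
  shows "f absolutely_integrable_on C \<and> integral C f = integral A f + integral B f"
proof -
  have "integral (A \<union> B) f = integral A f + integral B f"
    using A B \<open>A \<inter> B = {}\<close> by (simp add: absolutely_integrable_on_def)
  then show ?thesis
    using absolutely_integrable_finite_spike[OF absolutely_integrable_Un[OF A B], of "C - (A \<union> B)" C]
      assms(4,5) by auto
qed

lemma sixteen_less_square: "4 < c \<Longrightarrow> 16 < (c::real)^2"
  using power_strict_mono[of 4 c 2] by simp

text \<open>\<open>d(x)\<close> in the variable \<open>t = x + 1/x\<close>, with \<open>c\<close> standing for \<open>1/z\<close> (see \<open>tpoly_joukowski\<close>).\<close>
definition tpoly :: "real \<Rightarrow> real \<Rightarrow> real \<Rightarrow> real" where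
  "tpoly z c t = z^2 * (t^2 - 4) * ((t - c)^2 - 4)"

definition tintegrand :: "real \<Rightarrow> real \<Rightarrow> real \<Rightarrow> real" where
  "tintegrand z c t = 1 / sqrt (tpoly z c t)"

lemma tintegrand_reflect: "tintegrand z c (c - t) = tintegrand z c t"
  unfolding tintegrand_def tpoly_def by (simp add: algebra_simps power2_eq_square)

definition tmoebius :: "real \<Rightarrow> real \<Rightarrow> real" where
  "tmoebius c t = (c*t - 8) / (2*t - c)"

lemma tmoebius_shifted:
  assumes "2*t \<noteq> c"
  shows "tmoebius c t + 2 = (c+4)*(t-2)/(2*t-c)"
    and "tmoebius c t - 2 = (c-4)*(t+2)/(2*t-c)"
    and "tmoebius c t - c/2 = (c^2-16)/(2*(2*t-c))"
    and "tmoebius c t - (c+2) = (c+4)*(c-2-t)/(2*t-c)"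
    and "tmoebius c t - (c-2) = (c-4)*(c+2-t)/(2*t-c)"
  using assms by (auto simp: tmoebius_def field_simps) (auto simp: algebra_simps power2_eq_square)

lemma tmoebius_tmoebius:
  assumes "2*t \<noteq> c" "c^2 \<noteq> 16"
  shows "tmoebius c (tmoebius c t) = t"
proof -
  have "c * tmoebius c t - 8 = t * (c^2 - 16) / (2*t - c)"
    and "2 * tmoebius c t - c = (c^2 - 16) / (2*t - c)"
    using assms(1) by (simp_all add: tmoebius_def field_simps power2_eq_square)
  then show ?thesis
    using assms by (simp add: tmoebius_def[of c "tmoebius c t"])
qed

lemma tmoebius_has_derivative:
  assumes "2*t \<noteq> c"
  shows "(tmoebius c has_real_derivative (16 - c^2) / (2*t - c)^2) (at t)"
  unfolding tmoebius_def using assms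
  by (auto intro!: derivative_eq_intros simp: field_simps power2_eq_square)

lemma tpoly_tmoebius:
  assumes "2*t \<noteq> c"
  shows "tpoly z c (tmoebius c t) = ((c^2 - 16) / (2*t - c)^2)^2 * tpoly z c t"
proof -
  have "2*t - c \<noteq> 0" using assms by simp
  then have "tmoebius c t ^ 2 - 4 = (c^2 - 16) * (t^2 - 4) / (2*t - c)^2"
    and "(tmoebius c t - c)^2 - 4 = (c^2 - 16) * ((t - c)^2 - 4) / (2*t - c)^2"
    by (simp_all add: tmoebius_def field_simps) (simp_all add: algebra_simps power2_eq_square)
  then show ?thesis
    unfolding tpoly_def using \<open>2*t - c \<noteq> 0\<close> by (simp add: field_simps power2_eq_square)
qed

lemma tintegrand_tmoebius:
  assumes "2*t \<noteq> c" "4 < c"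
  shows "\<bar>(16 - c^2) / (2*t - c)^2\<bar> * tintegrand z c (tmoebius c t) = tintegrand z c t"
proof -
  define k where "k = (c^2 - 16) / (2*t - c)^2"
  have "0 < c^2 - 16" using sixteen_less_square[OF assms(2)] by simp
  then have "0 < k" "\<bar>(16 - c^2) / (2*t - c)^2\<bar> = k"
    using assms by (auto simp: k_def abs_div)
  moreover have "sqrt (tpoly z c (tmoebius c t)) = k * sqrt (tpoly z c t)"
    using \<open>0 < k\<close> by (simp add: tpoly_tmoebius[OF assms(1)] k_def[symmetric] real_sqrt_mult)
  ultimately show ?thesis unfolding tintegrand_def by simp
qed

lemma tintegrand_tmoebius_substitution:
  assumes c: "4 < c" and S: "S \<in> sets lebesgue"
    and ST: "\<And>t. t \<in> S \<Longrightarrow> 2*t \<noteq> c \<and> tmoebius c t \<in> T"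
    and TS: "\<And>u. u \<in> T \<Longrightarrow> 2*u \<noteq> c \<and> tmoebius c u \<in> S"
  shows "tintegrand z c absolutely_integrable_on S \<and> integral S (tintegrand z c) = v \<longleftrightarrow>
         tintegrand z c absolutely_integrable_on T \<and> integral T (tintegrand z c) = v"
proof -
  have "c^2 \<noteq> 16" using sixteen_less_square[OF c] by simp
  then have "bij_betw (tmoebius c) S T"
    using ST TS tmoebius_tmoebius by (intro bij_betw_byWitness[where f'="tmoebius c"]) auto
  then show ?thesis
    using absolutely_integrable_substitution_iff[OF S tmoebius_has_derivative, of c]
      tintegrand_tmoebius[OF _ c] ST
    by (simp add: bij_betw_def)
qed

lemma image_plus_square_greaterThanLessThan:
  fixes a L :: real
  assumes "0 < L"
  shows "(\<lambda>s. a + s^2) ` {0<..<L} = {a<..<a + L^2}"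
proof
  show "(\<lambda>s. a + s^2) ` {0<..<L} \<subseteq> {a<..<a + L^2}"
    using power_strict_mono[of _ L 2] by force
  show "{a<..<a + L^2} \<subseteq> (\<lambda>s. a + s^2) ` {0<..<L}"
  proof
    fix t assume t: "t \<in> {a<..<a + L^2}"
    then have "sqrt (t - a) \<in> {0<..<L}" "t = a + (sqrt (t - a))^2"
      using assms real_sqrt_less_mono[of "t - a" "L^2"] by auto
    then show "t \<in> (\<lambda>s. a + s^2) ` {0<..<L}" by blast
  qed
qed

text \<open>The substitution \<open>t = 2 + s^2\<close> removes the singularity at the root \<open>2\<close>.\<close>
lemma tintegrand_absolutely_integrable_2_half:
  assumes z: "0 < z" and c: "4 < c"
  shows "tintegrand z c absolutely_integrable_on {2<..<c/2}"
proof -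
  define L where "L = sqrt (c/2 - 2)"
  have "0 < L" and L2: "2 + L^2 = c/2" using c by (auto simp: L_def)
  define P where "P s = (4 + s^2) * (c - s^2) * (c - 4 - s^2)" for s :: real
  define h where "h s = 2 / (z * sqrt (P s))" for s
  have P_pos: "0 < P s" if "s \<in> {0..L}" for s
  proof -
    have "s^2 \<le> L^2" using that by (intro power_mono) auto
    then show ?thesis unfolding P_def using L2 c by (simp add: add_pos_nonneg)
  qed
  have "continuous_on {0..L} P" unfolding P_def by (intro continuous_intros)
  then have "continuous_on {0..L} h"
    unfolding h_def using P_pos z by (intro continuous_intros) force+
  then have "h absolutely_integrable_on {0..L}"
    by (intro nonnegative_absolutely_integrable_1 integrable_continuous_interval)
       (use P_pos z in \<open>auto simp: h_def intro!: less_imp_le\<close>)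
  then have h_int: "h absolutely_integrable_on {0<..<L}"
    using absolutely_integrable_finite_spike[where S="{0..L}" and E="{0, L}" and T="{0<..<L}"] by force
  have tintegrand_eq: "\<bar>2 * s\<bar> * tintegrand z c (2 + s^2) = h s" if s: "s \<in> {0<..<L}" for s
  proof -
    have "tpoly z c (2 + s^2) = (z * s)^2 * P s"
      unfolding tpoly_def P_def by (simp add: algebra_simps power2_eq_square)
    then show ?thesis using s z unfolding tintegrand_def h_def by (simp add: real_sqrt_mult)
  qed
  have "inj_on (\<lambda>s. 2 + s^2) {0<..<L}"
    by (auto simp: inj_on_def)
  moreover have "((\<lambda>s. 2 + s^2) has_real_derivative 2 * s) (at s)" for s :: real
    by (auto intro!: derivative_eq_intros)
  ultimately have "tintegrand z c absolutely_integrable_on (\<lambda>s. 2 + s^2) ` {0<..<L}"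
    using absolutely_integrable_substitution_iff[where S="{0<..<L}" and g'="\<lambda>s. 2 * s"
        and F="tintegrand z c" and f=h and v="integral {0<..<L} h"] tintegrand_eq h_int
    by simp
  then show ?thesis
    using image_plus_square_greaterThanLessThan[OF \<open>0 < L\<close>, of 2] L2 by simp
qed

lemma tintegrand_lower_ray:
  assumes z: "0 < z" and c: "4 < c"
  shows "tintegrand z c absolutely_integrable_on {..<-2} \<and>
         integral {..<-2} (tintegrand z c) = integral {2<..<c/2} (tintegrand z c)"
proof -
  have "2*t \<noteq> c \<and> tmoebius c t \<in> {..<-2}" if "t \<in> {2<..<c/2}" for t
  proof -
    have "(c + 4) * (t - 2) / (2*t - c) < 0" using that c by (intro divide_pos_neg) auto
    then show ?thesis using tmoebius_shifted(1)[of t c] that by auto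
  qed
  moreover have "2*u \<noteq> c \<and> tmoebius c u \<in> {2<..<c/2}" if "u \<in> {..<-2}" for u
  proof -
    have ne: "2*u \<noteq> c" and neg: "2*u - c < 0" using that c by auto
    have "0 < c^2 - 16" using sixteen_less_square[OF c] by simp
    then have "0 < (c - 4) * (u + 2) / (2*u - c)" "(c^2 - 16) / (2 * (2*u - c)) < 0"
      using that c neg by (auto intro!: divide_neg_neg divide_pos_neg mult_pos_neg)
    then show ?thesis using tmoebius_shifted(2,3)[OF ne] ne by auto
  qed
  ultimately show ?thesis
    using tintegrand_tmoebius_substitution[OF c, of "{2<..<c/2}" "{..<-2}"]
      tintegrand_absolutely_integrable_2_half[OF z c]
    by auto
qed

lemma tintegrand_upper_ray:
  assumes z: "0 < z" and c: "4 < c"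
  shows "tintegrand z c absolutely_integrable_on {c+2<..} \<and>
         integral {c+2<..} (tintegrand z c) = integral {..<-2} (tintegrand z c)"
proof -
  have image: "(\<lambda>t. c - t) ` {c+2<..} = {..<-2}"
  proof (intro equalityI subsetI)
    fix u :: real assume "u \<in> {..<-2}"
    then have "c - u \<in> {c+2<..}" "u = c - (c - u)" by auto
    then show "u \<in> (\<lambda>t. c - t) ` {c+2<..}" by blast
  qed auto
  have "((\<lambda>t. c - t) has_real_derivative -1) (at t)" for t
    by (auto intro!: derivative_eq_intros)
  moreover have "inj_on (\<lambda>t. c - t) {c+2<..}" by (simp add: inj_on_def)
  ultimately have "tintegrand z c absolutely_integrable_on {c+2<..} \<and>
        integral {c+2<..} (tintegrand z c) = integral {..<-2} (tintegrand z c) \<longleftrightarrow>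
      tintegrand z c absolutely_integrable_on (\<lambda>t. c - t) ` {c+2<..} \<and>
        integral ((\<lambda>t. c - t) ` {c+2<..}) (tintegrand z c) = integral {..<-2} (tintegrand z c)"
    by (intro absolutely_integrable_substitution_iff[where g'="\<lambda>_. -1"]) (simp_all add: tintegrand_reflect)
  then show ?thesis using image tintegrand_lower_ray[OF z c] by simp
qed

lemma tintegrand_middle:
  assumes z: "0 < z" and c: "4 < c"
  shows "tintegrand z c absolutely_integrable_on {2<..<c-2} \<and>
         integral {2<..<c-2} (tintegrand z c) = 2 * integral {..<-2} (tintegrand z c)"
proof -
  have "2*t \<noteq> c \<and> tmoebius c t \<in> {c+2<..}" if "t \<in> {c/2<..<c-2}" for t
  proof -
    have ne: "2*t \<noteq> c" using that by auto
    have "0 < (c + 4) * (c - 2 - t) / (2*t - c)" using that c by (intro divide_pos_pos) auto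
    then show ?thesis using tmoebius_shifted(4)[OF ne] ne by auto
  qed
  moreover have "2*u \<noteq> c \<and> tmoebius c u \<in> {c/2<..<c-2}" if "u \<in> {c+2<..}" for u
  proof -
    have ne: "2*u \<noteq> c" and pos: "0 < 2*u - c" using that c by auto
    have "0 < c^2 - 16" using sixteen_less_square[OF c] by simp
    then have "(c - 4) * (c + 2 - u) / (2*u - c) < 0" "0 < (c^2 - 16) / (2 * (2*u - c))"
      using that c pos by (auto intro!: divide_neg_pos divide_pos_pos mult_pos_neg)
    then show ?thesis using tmoebius_shifted(3,5)[OF ne] ne by auto
  qed
  ultimately have upper_half: "tintegrand z c absolutely_integrable_on {c/2<..<c-2} \<and>
      integral {c/2<..<c-2} (tintegrand z c) = integral {..<-2} (tintegrand z c)"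
    using tintegrand_tmoebius_substitution[OF c, of "{c/2<..<c-2}" "{c+2<..}"]
      tintegrand_upper_ray[OF z c]
    by auto
  have "{2<..<c-2} - ({2<..<c/2} \<union> {c/2<..<c-2}) = {c/2}" using c by auto
  then have "tintegrand z c absolutely_integrable_on {2<..<c-2} \<and> integral {2<..<c-2} (tintegrand z c) =
      integral {2<..<c/2} (tintegrand z c) + integral {c/2<..<c-2} (tintegrand z c)"
    using c absolutely_integrable_split[OF tintegrand_absolutely_integrable_2_half[OF z c]
        conjunct1[OF upper_half], of "{2<..<c-2}"]
    by (simp add: subset_iff)
  then show ?thesis using upper_half tintegrand_lower_ray[OF z c] by simp
qed

definition joukowski :: "real \<Rightarrow> real" where
  "joukowski x = x + 1/x"

text \<open>The inverse of \<open>joukowski\<close> on \<open>(0, 1]\<close>; the other preimage of \<open>t\<close> is its reciprocal.\<close>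
definition joukowski_inverse :: "real \<Rightarrow> real" where
  "joukowski_inverse t = (t - sqrt (t^2 - 4)) / 2"

lemma joukowski_reciprocal: "joukowski (1/x) = joukowski x"
  by (simp add: joukowski_def)

lemma joukowski_uminus: "joukowski (-x) = - joukowski x"
  by (simp add: joukowski_def)

lemma joukowski_eq_iff:
  assumes "x \<noteq> 0" "y \<noteq> 0"
  shows "joukowski x = joukowski y \<longleftrightarrow> x = y \<or> x * y = 1"
proof -
  have "joukowski y - joukowski x = (y - x) * (x*y - 1) / (x*y)"
    using assms by (simp add: joukowski_def field_simps)
  then show ?thesis using assms by auto
qed

lemma joukowski_strict_decreasing:
  assumes "0 < x" "x < y" "y \<le> 1"
  shows "joukowski y < joukowski x"
proof -
  have "x*y < 1*1" using assms by (intro mult_less_le_imp_less) auto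
  then have "(y - x) * (x*y - 1) / (x*y) < 0"
    using assms by (intro divide_neg_pos mult_pos_neg) auto
  moreover have "joukowski y - joukowski x = (y - x) * (x*y - 1) / (x*y)"
    using assms by (simp add: joukowski_def field_simps)
  ultimately show ?thesis by simp
qed

lemma joukowski_1: "joukowski 1 = 2"
  by (simp add: joukowski_def)

lemma joukowski_inverse:
  assumes "2 \<le> t"
  shows "0 < joukowski_inverse t" "joukowski_inverse t \<le> 1"
    and "joukowski (joukowski_inverse t) = t"
proof -
  define s where "s = sqrt (t^2 - 4)"
  have "2^2 \<le> t^2" using assms by (intro power_mono) auto
  then have s2: "s^2 = t^2 - 4" and "0 \<le> s" by (auto simp: s_def)
  have "s < t" using assms real_sqrt_less_mono[of "t^2 - 4" "t^2"] by (simp add: s_def)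
  then show "0 < joukowski_inverse t" by (simp add: joukowski_inverse_def s_def[symmetric])
  have "(t - 2)^2 \<le> s^2" unfolding s2 using assms by (simp add: power2_eq_square algebra_simps)
  then have "t - 2 \<le> s" using \<open>0 \<le> s\<close> power2_le_imp_le by blast
  then show "joukowski_inverse t \<le> 1" by (simp add: joukowski_inverse_def s_def[symmetric])
  have "(t - s) * (t + s) = 4" using s2 by (simp add: algebra_simps power2_eq_square)
  then show "joukowski (joukowski_inverse t) = t"
    using \<open>s < t\<close> by (simp add: joukowski_def joukowski_inverse_def s_def[symmetric] field_simps)
qed

lemma joukowski_ge_2:
  assumes "0 < x"
  shows "2 \<le> joukowski x"
proof -
  have "joukowski x - 2 = (x - 1)^2 / x"
    using assms by (simp add: joukowski_def field_simps power2_eq_square)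
  moreover have "0 \<le> (x - 1)^2 / x" using assms by simp
  ultimately show ?thesis by linarith
qed

lemma joukowski_less_iff:
  assumes "0 < x" "x \<le> 1" "0 < y" "y \<le> 1"
  shows "joukowski x < joukowski y \<longleftrightarrow> y < x"
  using assms joukowski_strict_decreasing[of x y] joukowski_strict_decreasing[of y x]
  by (cases x y rule: linorder_cases) auto

lemma joukowski_image_greaterThanLessThan:
  assumes "0 < a" "a < b" "b \<le> 1"
  shows "joukowski ` {a<..<b} = {joukowski b<..<joukowski a}"
proof (intro equalityI subsetI)
  fix t assume t: "t \<in> {joukowski b<..<joukowski a}"
  define x where "x = joukowski_inverse t"
  have "2 \<le> t" using joukowski_ge_2[of b] assms t by auto
  then have x: "0 < x" "x \<le> 1" "joukowski x = t" using joukowski_inverse by (auto simp: x_def)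
  then have "x \<in> {a<..<b}" using t assms joukowski_less_iff[of _ x] joukowski_less_iff[of x] by auto
  then show "t \<in> joukowski ` {a<..<b}" using x by auto
qed (use assms joukowski_less_iff in auto)

lemma joukowski_image_greaterThan_0:
  assumes "0 < b" "b \<le> 1"
  shows "joukowski ` {0<..<b} = {joukowski b<..}"
proof (intro equalityI subsetI)
  fix t assume t: "t \<in> {joukowski b<..}"
  define x where "x = joukowski_inverse t"
  have "2 \<le> t" using joukowski_ge_2[of b] assms t by auto
  then have x: "0 < x" "x \<le> 1" "joukowski x = t" using joukowski_inverse by (auto simp: x_def)
  then have "x \<in> {0<..<b}" using t assms joukowski_less_iff[of b x] by auto
  then show "t \<in> joukowski ` {0<..<b}" using x by auto
qed (use assms joukowski_less_iff in auto)

lemma reciprocal_image_greaterThanLessThan: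
  fixes a b :: real
  assumes "0 < a" "a < b"
  shows "(\<lambda>x. 1/x) ` {a<..<b} = {1/b<..<1/a}"
proof (intro equalityI subsetI)
  fix y assume y: "y \<in> {1/b<..<1/a}"
  then have "0 < y" using assms by (auto intro: less_trans[of 0 "1/b"])
  then have "1/y \<in> {a<..<b}" using y assms by (auto simp: field_simps)
  then show "y \<in> (\<lambda>x. 1/x) ` {a<..<b}" by (rule rev_image_eqI) simp
qed (use assms in \<open>auto simp: field_simps\<close>)

lemma reciprocal_image_greaterThan_0:
  fixes b :: real
  assumes "0 < b"
  shows "(\<lambda>x. 1/x) ` {0<..<b} = {1/b<..}"
proof (intro equalityI subsetI)
  fix y assume y: "y \<in> {1/b<..}"
  then have "0 < y" using assms by (auto intro: less_trans[of 0 "1/b"])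
  then have "1/y \<in> {0<..<b}" using y assms by (auto simp: field_simps)
  then show "y \<in> (\<lambda>x. 1/x) ` {0<..<b}" by (rule rev_image_eqI) simp
qed (use assms in \<open>auto simp: field_simps\<close>)

lemma joukowski_image_reciprocal: "joukowski ` (\<lambda>x. 1/x) ` A = joukowski ` A"
  by (simp add: image_image joukowski_reciprocal)

lemma joukowski_image_uminus: "joukowski ` uminus ` A = uminus ` joukowski ` A"
  by (simp add: image_image joukowski_uminus)

lemma joukowski_image_negative:
  shows "joukowski ` {-1<..<0} = {..<-2}" "joukowski ` {..<-1} = {..<-2}"
proof -
  have positive: "joukowski ` {0<..<1} = {2<..}"
    using joukowski_image_greaterThan_0[of 1] joukowski_1 by simp
  then show "joukowski ` {-1<..<0} = {..<-2}"
    using joukowski_image_uminus[of "{0<..<1}"] by simp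
  have "(\<lambda>x. 1/x) ` {0<..<1} = {1::real<..}"
    using reciprocal_image_greaterThan_0[of 1] by simp
  then have "joukowski ` {1<..} = {2<..}"
    using positive joukowski_image_reciprocal by metis
  then show "joukowski ` {..<-1} = {..<-2}"
    using joukowski_image_uminus[of "{1<..}"] by simp
qed

lemma inj_on_joukowski:
  shows "inj_on joukowski {0<..<1}" "inj_on joukowski {1<..}"
    and "inj_on joukowski {-1<..<0}" "inj_on joukowski {..<-1}"
proof -
  have below_1: "x * y \<noteq> 1" if "0 < x" "x < 1" "0 < y" "y < 1" for x y :: real
    using mult_strict_mono[of x 1 y 1] that by simp
  have above_1: "x * y \<noteq> 1" if "1 < x" "1 < y" for x y :: real
    using mult_strict_mono[of 1 x 1 y] that by simp
  show "inj_on joukowski {0<..<1}" "inj_on joukowski {1<..}"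
    using below_1 above_1 by (auto simp: inj_on_def joukowski_eq_iff)
  show "inj_on joukowski {-1<..<0}" "inj_on joukowski {..<-1}"
    using below_1[of "-x" "-y" for x y] above_1[of "-x" "-y" for x y]
    by (auto simp: inj_on_def joukowski_eq_iff)
qed

lemma joukowski_has_derivative:
  "x \<noteq> 0 \<Longrightarrow> (joukowski has_real_derivative 1 - 1/x^2) (at x)"
  unfolding joukowski_def by (auto intro!: derivative_eq_intros simp: power2_eq_square field_simps)

lemma tpoly_joukowski:
  assumes "0 < z" "x \<noteq> 0"
  shows "tpoly z (1/z) (joukowski x) = ((x^2 - 1) / x^2)^2 * dpoly z x"
  unfolding tpoly_def dpoly_def joukowski_def using assms
  by (simp add: field_simps) (simp add: algebra_simps power2_eq_square eval_nat_numeral)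

lemma tintegrand_joukowski:
  assumes "0 < z" "x \<noteq> 0" "x^2 \<noteq> 1"
  shows "\<bar>1 - 1/x^2\<bar> * tintegrand z (1/z) (joukowski x) = integrand z x"
proof -
  define k where "k = \<bar>x^2 - 1\<bar> / x^2"
  have "0 < k" "\<bar>1 - 1/x^2\<bar> = k" "((x^2 - 1) / x^2)^2 = k^2"
    using assms by (auto simp: k_def field_simps abs_div power_divide)
  then have "sqrt (tpoly z (1/z) (joukowski x)) = k * sqrt (dpoly z x)"
    using tpoly_joukowski[OF assms(1,2)] by (simp add: real_sqrt_mult)
  with \<open>0 < k\<close> \<open>\<bar>1 - 1/x^2\<bar> = k\<close> show ?thesis
    unfolding tintegrand_def integrand_def by simp
qed

lemma integrand_joukowski_substitution:
  assumes z: "0 < z" and S: "S \<in> sets lebesgue" "S \<inter> {-1, 0, 1} = {}"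
    and inj: "inj_on joukowski S" and image: "joukowski ` S = T"
    and int: "tintegrand z (1/z) absolutely_integrable_on T"
  shows "integrand z absolutely_integrable_on S \<and>
         integral S (integrand z) = integral T (tintegrand z (1/z))"
proof -
  have "x \<noteq> 0" "x^2 \<noteq> 1" if "x \<in> S" for x
    using S(2) that by (auto simp: power2_eq_1_iff)
  then show ?thesis
    using absolutely_integrable_substitution_iff[where S=S and g'="\<lambda>x. 1 - 1/x^2"
        and F="tintegrand z (1/z)" and f="integrand z" and v="integral T (tintegrand z (1/z))",
        OF S(1) joukowski_has_derivative inj tintegrand_joukowski[OF z]] int image
    by simp
qed

lemma joukowski_inverse_shifted_reciprocal:
  assumes "0 < z" "e^2 = 4"
  shows "joukowski_inverse (1/z + e) = (1 + e*z - sqrt (1 + 2*e*z)) / (2*z)"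
proof -
  have "(1/z + e)^2 - 4 = (1 + 2*e*z) / z^2"
    using assms by (simp add: field_simps power2_eq_square)
  then have "sqrt ((1/z + e)^2 - 4) = sqrt (1 + 2*e*z) / z"
    using assms by (simp add: real_sqrt_divide)
  then show ?thesis using assms by (simp add: joukowski_inverse_def field_simps)
qed

lemma root1_eq: "0 < z \<Longrightarrow> root1 z = joukowski_inverse (1/z + 2)"
  using joukowski_inverse_shifted_reciprocal[of z 2] by (simp add: root1_def)

lemma root2_eq: "0 < z \<Longrightarrow> root2 z = joukowski_inverse (1/z - 2)"
  using joukowski_inverse_shifted_reciprocal[of z "-2"] by (simp add: root2_def)

lemma root2_mult_root3:
  assumes "0 < z" "z \<le> 1/4"
  shows "root2 z * root3 z = 1"
proof -
  have "(sqrt (1 - 4*z))^2 = 1 - 4*z" using assms by simp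
  then show ?thesis
    using assms unfolding root2_def root3_def by (simp add: field_simps)
qed

lemma omega2_eq:
  assumes z: "0 < z" "z < 1/4"
  shows "integrand z absolutely_integrable_on {root2 z .. root3 z} \<and>
         omega2 z = 4 * integral {..<-2} (tintegrand z (1/z))"
proof -
  define r where "r = root2 z"
  define I where "I = integral {..<-2} (tintegrand z (1/z))"
  have c: "4 < 1/z" using z by (simp add: field_simps)
  have "0 < r" "r \<le> 1" and jr: "joukowski r = 1/z - 2"
    using joukowski_inverse[of "1/z - 2"] c root2_eq[OF z(1)] by (auto simp: r_def)
  then have "r < 1" using c joukowski_1 by (cases "r = 1") auto
  have "root3 z = 1/r"
    using root2_mult_root3[of z] z \<open>0 < r\<close> by (simp add: r_def field_simps)
  have jA: "joukowski ` {r<..<1} = {2<..<1/z - 2}"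
    using joukowski_image_greaterThanLessThan[OF \<open>0 < r\<close> \<open>r < 1\<close>] jr joukowski_1 by simp
  have "inj_on joukowski {r<..<1}"
    by (rule inj_on_subset[OF inj_on_joukowski(1)]) (use \<open>0 < r\<close> in auto)
  then have A: "integrand z absolutely_integrable_on {r<..<1} \<and> integral {r<..<1} (integrand z) = 2 * I"
    using integrand_joukowski_substitution[OF z(1) _ _ _ jA] tintegrand_middle[OF z(1) c] \<open>0 < r\<close>
    by (simp add: I_def)
  have "(\<lambda>x. 1/x) ` {r<..<1} = {1<..<1/r}"
    using reciprocal_image_greaterThanLessThan[OF \<open>0 < r\<close> \<open>r < 1\<close>] by simp
  then have jB: "joukowski ` {1<..<1/r} = {2<..<1/z - 2}"
    using jA joukowski_image_reciprocal by metis
  have "inj_on joukowski {1<..<1/r}"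
    by (rule inj_on_subset[OF inj_on_joukowski(2)]) auto
  then have B: "integrand z absolutely_integrable_on {1<..<1/r} \<and> integral {1<..<1/r} (integrand z) = 2 * I"
    using integrand_joukowski_substitution[OF z(1) _ _ _ jB] tintegrand_middle[OF z(1) c] \<open>0 < r\<close>
    by (simp add: I_def)
  have "1 < 1/r" using \<open>0 < r\<close> \<open>r < 1\<close> by simp
  then have "{r .. 1/r} - ({r<..<1} \<union> {1<..<1/r}) = {r, 1, 1/r}" using \<open>r < 1\<close> by auto
  then show ?thesis
    using absolutely_integrable_split[OF conjunct1[OF A] conjunct1[OF B], of "{r .. 1/r}"] A B
      \<open>r < 1\<close> \<open>1 < 1/r\<close>
    by (simp add: omega2_def \<open>root3 z = 1/r\<close> r_def[symmetric] I_def subset_iff)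
qed

lemma omega3_eq:
  assumes z: "0 < z" "z < 1/4"
  shows "integrand z absolutely_integrable_on {.. root1 z} \<and>
         omega3 z = 3 * integral {..<-2} (tintegrand z (1/z))"
proof -
  define r where "r = root1 z"
  define I where "I = integral {..<-2} (tintegrand z (1/z))"
  have c: "4 < 1/z" using z by (simp add: field_simps)
  have "0 < r" "r \<le> 1" and jr: "joukowski r = 1/z + 2"
    using joukowski_inverse[of "1/z + 2"] z root1_eq[OF z(1)] by (auto simp: r_def)
  have jP: "joukowski ` {0<..<r} = {1/z + 2<..}"
    using joukowski_image_greaterThan_0[OF \<open>0 < r\<close> \<open>r \<le> 1\<close>] jr by simp
  have "inj_on joukowski {0<..<r}"
    by (rule inj_on_subset[OF inj_on_joukowski(1)]) (use \<open>r \<le> 1\<close> in auto)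
  then have P: "integrand z absolutely_integrable_on {0<..<r} \<and> integral {0<..<r} (integrand z) = I"
    using integrand_joukowski_substitution[OF z(1) _ _ _ jP] tintegrand_upper_ray[OF z(1) c] \<open>r \<le> 1\<close>
    by (simp add: I_def)
  have N1: "integrand z absolutely_integrable_on {-1<..<0} \<and> integral {-1<..<0} (integrand z) = I"
    using integrand_joukowski_substitution[OF z(1) _ _ inj_on_joukowski(3) joukowski_image_negative(1)]
      tintegrand_lower_ray[OF z(1) c]
    by (simp add: I_def)
  have N2: "integrand z absolutely_integrable_on {..<-1} \<and> integral {..<-1} (integrand z) = I"
    using integrand_joukowski_substitution[OF z(1) _ _ inj_on_joukowski(4) joukowski_image_negative(2)]
      tintegrand_lower_ray[OF z(1) c]
    by (simp add: I_def)
  have "{..<0} - ({..<-1} \<union> {-1<..<0}) = {-1::real}" "{..<-1} \<inter> {-1<..<0} = ({} :: real set)"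
    by auto
  then have N: "integrand z absolutely_integrable_on {..<0} \<and> integral {..<0} (integrand z) = 2 * I"
    using absolutely_integrable_split[OF conjunct1[OF N2] conjunct1[OF N1], of "{..<0}"] N1 N2
    by (simp add: subset_iff)
  have "{..r} - ({..<0} \<union> {0<..<r}) = {0, r}" "{..<0} \<inter> {0<..<r} = {}"
    using \<open>0 < r\<close> by auto
  then show ?thesis
    using absolutely_integrable_split[OF conjunct1[OF N] conjunct1[OF P], of "{..r}"] N P \<open>0 < r\<close>
    by (simp add: omega3_def r_def[symmetric] I_def subset_iff)
qed

theorem proposition14:
  fixes z :: real
  assumes "0 < z" and "z < 1/4"
  shows "integrand z integrable_on {root2 z .. root3 z} \<and>
         integrand z integrable_on {.. root1 z} \<and>
         omega3 z = 3 * omega2 z / 4"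
  using omega2_eq[OF assms] omega3_eq[OF assms] by (simp add: absolutely_integrable_on_def)

end
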